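(* Let $G$ be a group, $S$ a nonempty multiset of elements of $G$, and $\Gamma=\Phi(G,S)$. Then each connected component of $\Gamma$ is isomorphic to $\Phi(\langle S\rangle,S)$, and the set of connected components of $\Gamma$ is in one-to-one correspondence with the set of right cosets of $\langle S\rangle$ in $G$.
   Context: $\langle S\rangle$ is the subgroup generated by the elements of $S$. For a group $G$ and a multiset $S$ of elements of $G$, $\Phi(G,S)$ is the multigraph (parallel edges allowed, edges labeled by elements of $G$) whose vertex set is the union over the members $s$ of $S$ (with multiplicity, a repeated element giving a separate copy of its cosets per occurrence) of $V_s=\{\langle s\rangle x: x\in G\}$ (right cosets), with, for $\langle s\rangle x\in V_s$, $\langle t\rangle y\in V_t$, $s,t$ distinct members of $S$, one edge labeled $g$ between them for each $g\in\langle s\rangle x\cap\langle t\rangle y$, and no other edges. Isomorphism means isomorphism of multigraphs (bijections on vertices and edges compatible with incidence). *)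

theory Defs
  imports "HOL-Algebra.Algebra" "HOL-Library.Multiset"
begin

text \<open>Multigraphs: a vertex set, an edge set and an incidence map sending
each edge to its set of endpoints (parallel edges allowed).\<close>
record ('v, 'e) mgraph =
  mverts :: "'v set"
  medges :: "'e set"
  mends  :: "'e \<Rightarrow> 'v set"

definition mg_isomorphic :: "('v, 'e) mgraph \<Rightarrow> ('w, 'f) mgraph \<Rightarrow> bool" where
  "mg_isomorphic A B \<longleftrightarrow>
     (\<exists>f h. bij_betw f (mverts A) (mverts B) \<and> bij_betw h (medges A) (medges B) \<and>
            (\<forall>e \<in> medges A. mends B (h e) = f ` mends A e))"

definition mg_adj :: "('v, 'e) mgraph \<Rightarrow> 'v \<Rightarrow> 'v \<Rightarrow> bool" where
  "mg_adj A u v \<longleftrightarrow> u \<in> mverts A \<and> v \<in> mverts A \<and> (\<exists>e \<in> medges A. {u, v} \<subseteq> mends A e)"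

definition mg_components :: "('v, 'e) mgraph \<Rightarrow> 'v set set" where
  "mg_components A = {{v. (mg_adj A)\<^sup>*\<^sup>* u v} | u. u \<in> mverts A}"

definition mg_induced :: "('v, 'e) mgraph \<Rightarrow> 'v set \<Rightarrow> ('v, 'e) mgraph" where
  "mg_induced A C = \<lparr> mverts = C, medges = {e \<in> medges A. mends A e \<subseteq> C}, mends = mends A \<rparr>"

text \<open>Occurrences of elements in a multiset: the pair (a, k) with k < count S a
stands for the (k+1)-th copy of a.\<close>
definition occs :: "'a multiset \<Rightarrow> ('a \<times> nat) set" where
  "occs S = {(a, k). k < count S a}"

definition Phi :: "('a, 'm) monoid_scheme \<Rightarrow> 'a multiset \<Rightarrow>
    (('a \<times> nat) \<times> 'a set, (('a \<times> nat) \<times> 'a set) set \<times> 'a) mgraph" where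
  "Phi G S =
    (let V = {(oc, c). oc \<in> occs S \<and> c \<in> rcosets\<^bsub>G\<^esub> (generate G {fst oc})}
     in \<lparr> mverts = V,
          medges = {({u, v}, g) | u v g. u \<in> V \<and> v \<in> V \<and> fst u \<noteq> fst v
                                    \<and> g \<in> snd u \<inter> snd v},
          mends = fst \<rparr>)"

end

theory Submission
  imports Defs
begin

text \<open>Write H for the subgroup generated by S. The coset of a vertex (s, \<langle>s\<rangle>y) lies in the
single right coset H y, and adjacent vertices share an element, so a component never leaves the
block of vertices whose cosets lie in one right coset of H. Conversely, the vertices through a
common element y are pairwise adjacent, and for a generator a the vertex (a, \<langle>a\<rangle>y) is also the
vertex (a, \<langle>a\<rangle>ay); so one walks from the vertices through y to those through hy for every h in H,
and the components are exactly these blocks, one for each right coset of H. Right multiplication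
by x\<inverse> is an automorphism of the graph carrying the block of H x onto the block of H, and the
latter is the graph of H itself, since \<langle>a\<rangle> and its cosets are the same whether computed in G or in
H.\<close>

lemma mg_isomorphic_induced_image:
  assumes f: "bij_betw f (mverts A) (mverts B)" and h: "bij_betw h (medges A) (medges B)"
    and ends: "\<forall>e \<in> medges A. mends B (h e) = f ` mends A e"
    and ends_verts: "\<forall>e \<in> medges A. mends A e \<subseteq> mverts A"
    and C: "C \<subseteq> mverts A"
  shows "mg_isomorphic (mg_induced A C) (mg_induced B (f ` C))"
proof -
  have inj: "inj_on f (mverts A)"
    using f by (rule bij_betw_imp_inj_on)
  have ends_in_C: "mends A e \<subseteq> C \<longleftrightarrow> mends B (h e) \<subseteq> f ` C" if e: "e \<in> medges A" for e
  proof
    assume fC: "mends B (h e) \<subseteq> f ` C"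
    show "mends A e \<subseteq> C"
    proof
      fix v assume "v \<in> mends A e"
      then show "v \<in> C"
        using fC ends e ends_verts inj_on_image_mem_iff[OF inj _ C] by blast
    qed
  qed (use ends e in auto)
  have "h ` {e \<in> medges A. mends A e \<subseteq> C} = {e \<in> medges B. mends B e \<subseteq> f ` C}"
    using h ends_in_C by (fastforce simp: bij_betw_def)
  then have "bij_betw h {e \<in> medges A. mends A e \<subseteq> C} {e \<in> medges B. mends B e \<subseteq> f ` C}"
    by (intro bij_betw_subset[OF h]) auto
  moreover have "bij_betw f C (f ` C)"
    using bij_betw_subset[OF f C] by blast
  ultimately show ?thesis
    unfolding mg_isomorphic_def mg_induced_def using ends by (simp (no_asm_simp)) blast
qed

definition coset_vertex :: "('a, 'm) monoid_scheme \<Rightarrow> 'a \<times> nat \<Rightarrow> 'a \<Rightarrow> ('a \<times> nat) \<times> 'a set" where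
  "coset_vertex G oc y = (oc, generate G {fst oc} #>\<^bsub>G\<^esub> y)"

lemma occs_fst_in_mset: "oc \<in> occs S \<Longrightarrow> fst oc \<in># S"
  by (cases oc) (auto simp: occs_def intro: count_inI)

lemma mverts_Phi:
  "w \<in> mverts (Phi G S) \<longleftrightarrow> fst w \<in> occs S \<and> (\<exists>y \<in> carrier G. w = coset_vertex G (fst w) y)"
  by (cases w) (auto simp: Phi_def Let_def RCOSETS_def coset_vertex_def)

lemma medges_Phi:
  "e \<in> medges (Phi G S) \<longleftrightarrow>
     (\<exists>u v g. e = ({u, v}, g) \<and> u \<in> mverts (Phi G S) \<and> v \<in> mverts (Phi G S) \<and> fst u \<noteq> fst v
        \<and> g \<in> snd u \<inter> snd v)"
  by (simp add: Phi_def Let_def)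

lemma mends_Phi: "mends (Phi G S) = fst"
  by (simp add: Phi_def Let_def)

lemma mends_Phi_subset_mverts: "e \<in> medges (Phi G S) \<Longrightarrow> mends (Phi G S) e \<subseteq> mverts (Phi G S)"
  by (auto simp: medges_Phi mends_Phi)

lemma medges_Phi_subgraph:
  assumes "mverts (Phi G' S) \<subseteq> mverts (Phi G S)"
  shows "medges (Phi G' S) = {e \<in> medges (Phi G S). fst e \<subseteq> mverts (Phi G' S)}"
proof (intro equalityI subsetI)
  fix e assume "e \<in> medges (Phi G' S)"
  then obtain u v g where uvg: "e = ({u, v}, g)" "u \<in> mverts (Phi G' S)" "v \<in> mverts (Phi G' S)"
    "fst u \<noteq> fst v" "g \<in> snd u \<inter> snd v"
    unfolding medges_Phi by blast
  then have "e \<in> medges (Phi G S)"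
    unfolding medges_Phi using assms by (intro exI[of _ u] exI[of _ v] exI[of _ g]) auto
  then show "e \<in> {e \<in> medges (Phi G S). fst e \<subseteq> mverts (Phi G' S)}"
    using uvg by simp
next
  fix e assume "e \<in> {e \<in> medges (Phi G S). fst e \<subseteq> mverts (Phi G' S)}"
  then obtain u v g where "e = ({u, v}, g)" "fst u \<noteq> fst v" "g \<in> snd u \<inter> snd v"
    "{u, v} \<subseteq> mverts (Phi G' S)"
    unfolding medges_Phi by auto
  then show "e \<in> medges (Phi G' S)"
    unfolding medges_Phi by (intro exI[of _ u] exI[of _ v] exI[of _ g]) simp
qed

lemma mg_adj_Phi_common_element:
  "mg_adj (Phi G S) u v \<Longrightarrow> \<exists>g. g \<in> snd u \<and> g \<in> snd v"
  by (fastforce simp: mg_adj_def medges_Phi mends_Phi)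

definition coset_block :: "('a, 'm) monoid_scheme \<Rightarrow> 'a multiset \<Rightarrow> 'a set \<Rightarrow> (('a \<times> nat) \<times> 'a set) set" where
  "coset_block G S Q = {w \<in> mverts (Phi G S). snd w \<subseteq> Q}"

definition translate_vertex ::
    "('a, 'm) monoid_scheme \<Rightarrow> 'a \<Rightarrow> ('a \<times> nat) \<times> 'a set \<Rightarrow> ('a \<times> nat) \<times> 'a set" where
  "translate_vertex G x w = (fst w, snd w #>\<^bsub>G\<^esub> x)"

definition translate_edge ::
    "('a, 'm) monoid_scheme \<Rightarrow> 'a \<Rightarrow> (('a \<times> nat) \<times> 'a set) set \<times> 'a \<Rightarrow> (('a \<times> nat) \<times> 'a set) set \<times> 'a" where
  "translate_edge G x e = (translate_vertex G x ` fst e, snd e \<otimes>\<^bsub>G\<^esub> x)"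

locale Phi_graph = group G for G :: "('a, 'm) monoid_scheme" (structure) +
  fixes S :: "'a multiset"
  assumes S_carrier: "set_mset S \<subseteq> carrier G"
begin

abbreviation H :: "'a set" where "H \<equiv> generate G (set_mset S)"

lemma subgroup_H: "subgroup H G"
  using S_carrier by (rule generate_is_subgroup)

lemma H_carrier: "H \<subseteq> carrier G"
  using subgroup_H by (rule subgroup.subset)

lemma occs_carrier: "oc \<in> occs S \<Longrightarrow> fst oc \<in> carrier G"
  using S_carrier occs_fst_in_mset by blast

lemma subgroup_cyclic: "oc \<in> occs S \<Longrightarrow> subgroup (generate G {fst oc}) G"
  by (simp add: generate_is_subgroup occs_carrier)

lemma cyclic_subset_H: "oc \<in> occs S \<Longrightarrow> generate G {fst oc} \<subseteq> H"
  by (simp add: mono_generate occs_fst_in_mset)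

lemma coset_vertex_in_mverts:
  "oc \<in> occs S \<Longrightarrow> y \<in> carrier G \<Longrightarrow> coset_vertex G oc y \<in> mverts (Phi G S)"
  by (auto simp: mverts_Phi coset_vertex_def)

lemma in_coset_vertex: "oc \<in> occs S \<Longrightarrow> y \<in> carrier G \<Longrightarrow> y \<in> snd (coset_vertex G oc y)"
  by (simp add: coset_vertex_def rcos_self subgroup_cyclic)

lemma coset_vertex_subset: "oc \<in> occs S \<Longrightarrow> snd (coset_vertex G oc y) \<subseteq> H #> y"
  using cyclic_subset_H[of oc] by (auto simp: coset_vertex_def r_coset_def)

lemma coset_vertex_eq:
  assumes "oc \<in> occs S" "y \<in> carrier G" "g \<in> snd (coset_vertex G oc y)"
  shows "coset_vertex G oc g = coset_vertex G oc y"
  using repr_independence[OF _ assms(2) subgroup_cyclic[OF assms(1)]] assms(3)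
  by (simp add: coset_vertex_def)

lemma mverts_Phi_subset_coset:
  assumes "w \<in> mverts (Phi G S)" "g \<in> snd w"
  shows "snd w \<subseteq> H #> g"
proof -
  obtain y where "y \<in> carrier G" and w: "w = coset_vertex G (fst w) y" and oc: "fst w \<in> occs S"
    using assms(1) by (auto simp: mverts_Phi)
  then have "w = coset_vertex G (fst w) g"
    using coset_vertex_eq assms(2) by metis
  then show ?thesis
    using coset_vertex_subset[OF oc] by metis
qed

lemma coset_block_adj_closed:
  assumes "w \<in> coset_block G S (H #> y)" "y \<in> carrier G" "mg_adj (Phi G S) w w'"
  shows "w' \<in> coset_block G S (H #> y)"
proof -
  obtain g where g: "g \<in> snd w" "g \<in> snd w'"
    using mg_adj_Phi_common_element[OF assms(3)] by blast
  have w': "w' \<in> mverts (Phi G S)"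
    using assms(3) by (simp add: mg_adj_def)
  have "g \<in> H #> y"
    using assms(1) g(1) by (auto simp: coset_block_def)
  then have "H #> g = H #> y"
    using repr_independence[OF _ assms(2) subgroup_H] by simp
  then show ?thesis
    using mverts_Phi_subset_coset[OF w' g(2)] w' by (simp add: coset_block_def)
qed

lemma coset_vertices_adjacent:
  assumes "oc \<in> occs S" "oc' \<in> occs S" "oc \<noteq> oc'" "y \<in> carrier G"
  shows "mg_adj (Phi G S) (coset_vertex G oc y) (coset_vertex G oc' y)"
proof -
  let ?u = "coset_vertex G oc y" and ?v = "coset_vertex G oc' y"
  have "({?u, ?v}, y) \<in> medges (Phi G S)"
    unfolding medges_Phi using assms
    by (intro exI[of _ ?u] exI[of _ ?v] exI[of _ y])
      (simp add: coset_vertex_in_mverts in_coset_vertex, simp add: coset_vertex_def)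
  then show ?thesis
    unfolding mg_adj_def mends_Phi using assms(1,2,4)
    by (intro conjI coset_vertex_in_mverts bexI[of _ "({?u, ?v}, y)"]) auto
qed

lemma coset_vertices_connected:
  "oc \<in> occs S \<Longrightarrow> oc' \<in> occs S \<Longrightarrow> y \<in> carrier G \<Longrightarrow>
    (mg_adj (Phi G S))\<^sup>*\<^sup>* (coset_vertex G oc y) (coset_vertex G oc' y)"
  by (cases "oc = oc'") (auto intro: coset_vertices_adjacent)

lemma coset_vertices_connected_cyclic:
  assumes "a \<in># S" "t \<in> generate G {a}" "oc \<in> occs S" "oc' \<in> occs S" "y \<in> carrier G"
  shows "(mg_adj (Phi G S))\<^sup>*\<^sup>* (coset_vertex G oc y) (coset_vertex G oc' (t \<otimes> y))"
proof -
  have a: "(a, 0) \<in> occs S"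
    using assms(1) by (simp add: occs_def)
  have t: "t \<in> carrier G"
    using generate_in_carrier[OF _ assms(2)] assms(1) S_carrier by blast
  have "t \<otimes> y \<in> snd (coset_vertex G (a, 0) y)"
    using assms(2) rcosI generate_incl[of "{a}"] assms(1,5) S_carrier
    by (auto simp: coset_vertex_def)
  then have "coset_vertex G (a, 0) (t \<otimes> y) = coset_vertex G (a, 0) y"
    using coset_vertex_eq[OF a assms(5)] by blast
  then show ?thesis
    using coset_vertices_connected[OF assms(3) a assms(5)]
      coset_vertices_connected[OF a assms(4) m_closed[OF t assms(5)]]
    by (metis (no_types, lifting) rtranclp_trans)
qed

lemma coset_vertices_connected_H:
  assumes "h \<in> H" "oc \<in> occs S" "oc' \<in> occs S" "y \<in> carrier G"
  shows "(mg_adj (Phi G S))\<^sup>*\<^sup>* (coset_vertex G oc y) (coset_vertex G oc' (h \<otimes> y))"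
  using assms
proof (induction arbitrary: oc oc' y)
  case one
  then show ?case by (simp add: coset_vertices_connected)
next
  case (incl a)
  then show ?case by (intro coset_vertices_connected_cyclic) (auto intro: generate.incl)
next
  case (inv a)
  then show ?case by (intro coset_vertices_connected_cyclic) (auto intro: generate.inv)
next
  case (eng h1 h2)
  have h: "h1 \<in> carrier G" "h2 \<in> carrier G"
    using eng.hyps generate_in_carrier S_carrier by blast+
  have "(mg_adj (Phi G S))\<^sup>*\<^sup>* (coset_vertex G oc y) (coset_vertex G oc (h2 \<otimes> y))"
    using eng.IH(2) eng.prems by blast
  moreover have "(mg_adj (Phi G S))\<^sup>*\<^sup>* (coset_vertex G oc (h2 \<otimes> y)) (coset_vertex G oc' (h1 \<otimes> (h2 \<otimes> y)))"
    using eng.IH(1) eng.prems h by blast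
  ultimately show ?case
    by (simp add: m_assoc h eng.prems)
qed

lemma component_coset_vertex:
  assumes oc: "oc \<in> occs S" and y: "y \<in> carrier G"
  shows "{w. (mg_adj (Phi G S))\<^sup>*\<^sup>* (coset_vertex G oc y) w} = coset_block G S (H #> y)"
proof (intro equalityI subsetI)
  fix w assume "w \<in> {w. (mg_adj (Phi G S))\<^sup>*\<^sup>* (coset_vertex G oc y) w}"
  then have "(mg_adj (Phi G S))\<^sup>*\<^sup>* (coset_vertex G oc y) w" by simp
  then show "w \<in> coset_block G S (H #> y)"
  proof induction
    case base
    show ?case
      using coset_vertex_in_mverts[OF oc y] coset_vertex_subset[OF oc]
      by (simp add: coset_block_def)
  next
    case (step w w')
    then show ?case using coset_block_adj_closed y by blast
  qed
next
  fix w assume w: "w \<in> coset_block G S (H #> y)"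
  then obtain y' where y': "y' \<in> carrier G" "w = coset_vertex G (fst w) y'" and ow: "fst w \<in> occs S"
    by (auto simp: coset_block_def mverts_Phi)
  have "y' \<in> H #> y"
    using in_coset_vertex[OF ow y'(1)] y'(2) w by (auto simp: coset_block_def)
  then obtain h where "h \<in> H" "y' = h \<otimes> y"
    by (auto simp: r_coset_def)
  then have "(mg_adj (Phi G S))\<^sup>*\<^sup>* (coset_vertex G oc y) (coset_vertex G (fst w) y')"
    using coset_vertices_connected_H[OF _ oc ow y] by simp
  then show "w \<in> {w. (mg_adj (Phi G S))\<^sup>*\<^sup>* (coset_vertex G oc y) w}"
    using y'(2) by (metis mem_Collect_eq)
qed

lemma mg_components_Phi:
  assumes "S \<noteq> {#}"
  shows "mg_components (Phi G S) = coset_block G S ` (rcosets H)"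
proof (intro equalityI subsetI)
  fix C assume "C \<in> mg_components (Phi G S)"
  then obtain u where u: "u \<in> mverts (Phi G S)" "C = {v. (mg_adj (Phi G S))\<^sup>*\<^sup>* u v}"
    unfolding mg_components_def by blast
  then obtain y where "y \<in> carrier G" "u = coset_vertex G (fst u) y" "fst u \<in> occs S"
    by (auto simp: mverts_Phi)
  then show "C \<in> coset_block G S ` (rcosets H)"
    using component_coset_vertex u(2) rcosetsI[OF H_carrier] by (metis image_eqI)
next
  fix C assume "C \<in> coset_block G S ` (rcosets H)"
  then obtain y where y: "y \<in> carrier G" "C = coset_block G S (H #> y)"
    by (auto simp: RCOSETS_def)
  obtain a where "a \<in># S" using assms by (meson multiset_nonemptyE)
  then have a: "(a, 0) \<in> occs S" by (simp add: occs_def)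
  show "C \<in> mg_components (Phi G S)"
    using component_coset_vertex[OF a y(1)] coset_vertex_in_mverts[OF a y(1)] y(2)
    unfolding mg_components_def by blast
qed

lemma inj_on_coset_block:
  assumes "S \<noteq> {#}"
  shows "inj_on (coset_block G S) (rcosets H)"
proof
  fix Q Q' assume Q: "Q \<in> rcosets H" and Q': "Q' \<in> rcosets H"
    and eq: "coset_block G S Q = coset_block G S Q'"
  obtain x where x: "x \<in> carrier G" "Q = H #> x" using Q by (auto simp: RCOSETS_def)
  obtain x' where x': "x' \<in> carrier G" "Q' = H #> x'" using Q' by (auto simp: RCOSETS_def)
  obtain a where "a \<in># S" using assms by (meson multiset_nonemptyE)
  then have a: "(a, 0) \<in> occs S" by (simp add: occs_def)
  have "coset_vertex G (a, 0) x \<in> coset_block G S Q"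
    using coset_vertex_in_mverts[OF a x(1)] coset_vertex_subset[OF a] x(2)
    by (simp add: coset_block_def)
  then have "coset_vertex G (a, 0) x \<in> coset_block G S Q'"
    using eq by simp
  then have "x \<in> Q'"
    using in_coset_vertex[OF a x(1)] unfolding coset_block_def by blast
  then show "Q = Q'"
    using repr_independence[OF _ x'(1) subgroup_H] x x' by simp
qed

lemma mverts_Phi_carrier:
  assumes "w \<in> mverts (Phi G S)"
  shows "snd w \<subseteq> carrier G"
proof -
  obtain oc y where "oc \<in> occs S" "y \<in> carrier G" "w = coset_vertex G oc y"
    using assms unfolding mverts_Phi by blast
  then show ?thesis
    using r_coset_subset_G subgroup.subset[OF subgroup_cyclic] by (simp add: coset_vertex_def)
qed

lemma translate_coset_vertex:
  "oc \<in> occs S \<Longrightarrow> y \<in> carrier G \<Longrightarrow> x \<in> carrier G \<Longrightarrow>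
    translate_vertex G x (coset_vertex G oc y) = coset_vertex G oc (y \<otimes> x)"
  using subgroup.subset[OF subgroup_cyclic]
  by (simp add: translate_vertex_def coset_vertex_def coset_mult_assoc)

lemma translate_vertex_in_mverts:
  assumes "w \<in> mverts (Phi G S)" "x \<in> carrier G"
  shows "translate_vertex G x w \<in> mverts (Phi G S)"
proof -
  obtain oc y where "oc \<in> occs S" "y \<in> carrier G" "w = coset_vertex G oc y"
    using assms(1) unfolding mverts_Phi by blast
  then show ?thesis
    using translate_coset_vertex coset_vertex_in_mverts assms(2) by simp
qed

lemma translate_vertex_inverse:
  "w \<in> mverts (Phi G S) \<Longrightarrow> x \<in> carrier G \<Longrightarrow> translate_vertex G (inv x) (translate_vertex G x w) = w"
  using mverts_Phi_carrier by (simp add: translate_vertex_def coset_mult_assoc)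

lemma translate_edge_in_medges:
  assumes "e \<in> medges (Phi G S)" "x \<in> carrier G"
  shows "translate_edge G x e \<in> medges (Phi G S)"
proof -
  obtain u v g where e: "e = ({u, v}, g)" and uv: "u \<in> mverts (Phi G S)" "v \<in> mverts (Phi G S)"
    and "fst u \<noteq> fst v" and "g \<in> snd u" "g \<in> snd v"
    using assms(1) by (auto simp: medges_Phi)
  let ?u = "translate_vertex G x u" and ?v = "translate_vertex G x v"
  have "translate_edge G x e = ({?u, ?v}, g \<otimes> x)"
    by (simp add: e translate_edge_def)
  moreover have "g \<otimes> x \<in> snd ?u \<inter> snd ?v" "fst ?u \<noteq> fst ?v"
    using \<open>g \<in> snd u\<close> \<open>g \<in> snd v\<close> \<open>fst u \<noteq> fst v\<close>
    by (auto simp: translate_vertex_def r_coset_def)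
  ultimately show ?thesis
    unfolding medges_Phi using translate_vertex_in_mverts uv assms(2) by blast
qed

lemma translate_edge_inverse:
  assumes "e \<in> medges (Phi G S)" "x \<in> carrier G"
  shows "translate_edge G (inv x) (translate_edge G x e) = e"
proof -
  obtain u v g where e: "e = ({u, v}, g)" and uv: "u \<in> mverts (Phi G S)" "v \<in> mverts (Phi G S)"
    and "g \<in> snd u"
    using assms(1) by (auto simp: medges_Phi)
  then have "g \<in> carrier G"
    using mverts_Phi_carrier by blast
  then show ?thesis
    using e uv assms(2) by (simp add: translate_edge_def translate_vertex_inverse m_assoc)
qed

lemma bij_betw_translate_vertex:
  "x \<in> carrier G \<Longrightarrow> bij_betw (translate_vertex G x) (mverts (Phi G S)) (mverts (Phi G S))"
  by (rule bij_betw_byWitness[where f' = "translate_vertex G (inv x)"])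
    (auto simp: translate_vertex_inverse translate_vertex_in_mverts
      dest: translate_vertex_inverse[where x = "inv x"])

lemma bij_betw_translate_edge:
  "x \<in> carrier G \<Longrightarrow> bij_betw (translate_edge G x) (medges (Phi G S)) (medges (Phi G S))"
  by (rule bij_betw_byWitness[where f' = "translate_edge G (inv x)"])
    (auto simp: translate_edge_inverse translate_edge_in_medges
      dest: translate_edge_inverse[where x = "inv x"])

lemma translate_coset_block:
  assumes "Q \<subseteq> carrier G" "x \<in> carrier G"
  shows "translate_vertex G x ` coset_block G S Q = coset_block G S (Q #> x)"
proof (intro equalityI subsetI)
  fix w assume "w \<in> translate_vertex G x ` coset_block G S Q"
  then obtain v where "v \<in> mverts (Phi G S)" "snd v \<subseteq> Q" "w = translate_vertex G x v"
    by (auto simp: coset_block_def)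
  then show "w \<in> coset_block G S (Q #> x)"
    using translate_vertex_in_mverts assms(2)
    by (auto simp: coset_block_def translate_vertex_def r_coset_def)
next
  fix w assume w: "w \<in> coset_block G S (Q #> x)"
  then have "snd w #> inv x \<subseteq> (Q #> x) #> inv x"
    by (auto simp: coset_block_def r_coset_def)
  also have "\<dots> = Q"
    using assms by (simp add: coset_mult_assoc)
  finally have "translate_vertex G (inv x) w \<in> coset_block G S Q"
    using translate_vertex_in_mverts[of w "inv x"] w assms(2)
    by (simp add: coset_block_def translate_vertex_def)
  moreover have "w = translate_vertex G x (translate_vertex G (inv x) w)"
    using translate_vertex_inverse[of w "inv x"] w assms(2) by (simp add: coset_block_def)
  ultimately show "w \<in> translate_vertex G x ` coset_block G S Q" by blast
qed

lemma coset_vertex_subset_subgroup_iff: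
  assumes K: "subgroup K G" "fst oc \<in> K" and oc: "oc \<in> occs S" and y: "y \<in> carrier G"
  shows "snd (coset_vertex G oc y) \<subseteq> K \<longleftrightarrow> y \<in> K"
proof
  assume "snd (coset_vertex G oc y) \<subseteq> K"
  then show "y \<in> K" using in_coset_vertex[OF oc y] by blast
next
  assume "y \<in> K"
  have "generate G {fst oc} \<subseteq> K"
    using K generate_subgroup_incl by blast
  then have "snd (coset_vertex G oc y) \<subseteq> K #> y"
    by (auto simp: coset_vertex_def r_coset_def)
  then show "snd (coset_vertex G oc y) \<subseteq> K"
    using coset_join2[OF y K(1) \<open>y \<in> K\<close>] by simp
qed

lemma induced_coset_block_subgroup:
  assumes K: "subgroup K G" "set_mset S \<subseteq> K"
  shows "mg_induced (Phi G S) (coset_block G S K) = Phi (G\<lparr>carrier := K\<rparr>) S"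
proof -
  have fst_K: "fst oc \<in> K" if "oc \<in> occs S" for oc
    using K(2) occs_fst_in_mset[OF that] by blast
  have cv: "coset_vertex (G\<lparr>carrier := K\<rparr>) oc y = coset_vertex G oc y" if "oc \<in> occs S" for oc y
    using generate_consistent[of "{fst oc}" K] fst_K[OF that] K(1)
    by (simp add: coset_vertex_def r_coset_def)
  have verts: "mverts (Phi (G\<lparr>carrier := K\<rparr>) S) = coset_block G S K"
  proof (intro equalityI subsetI)
    fix w assume "w \<in> mverts (Phi (G\<lparr>carrier := K\<rparr>) S)"
    then obtain y where "y \<in> K" "w = coset_vertex G (fst w) y" "fst w \<in> occs S"
      by (auto simp: mverts_Phi cv)
    then show "w \<in> coset_block G S K"
      using coset_vertex_in_mverts coset_vertex_subset_subgroup_iff[OF K(1) fst_K]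
        subgroup.mem_carrier[OF K(1)]
      by (metis (no_types, lifting) coset_block_def mem_Collect_eq)
  next
    fix w assume "w \<in> coset_block G S K"
    then obtain y where "y \<in> carrier G" "w = coset_vertex G (fst w) y" "fst w \<in> occs S"
      "snd w \<subseteq> K"
      by (auto simp: coset_block_def mverts_Phi)
    then show "w \<in> mverts (Phi (G\<lparr>carrier := K\<rparr>) S)"
      using coset_vertex_subset_subgroup_iff[OF K(1) fst_K] cv
      by (simp add: mverts_Phi) metis
  qed
  have "coset_block G S K \<subseteq> mverts (Phi G S)"
    by (auto simp: coset_block_def)
  then show ?thesis
    using medges_Phi_subgraph[of "G\<lparr>carrier := K\<rparr>" S G]
    by (intro mgraph.equality) (simp_all add: mg_induced_def verts mends_Phi)
qed

lemma component_isomorphic: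
  assumes x: "x \<in> carrier G"
  shows "mg_isomorphic (mg_induced (Phi G S) (coset_block G S (H #> x))) (Phi (G\<lparr>carrier := H\<rparr>) S)"
proof -
  have "translate_vertex G (inv x) ` coset_block G S (H #> x) = coset_block G S ((H #> x) #> inv x)"
    using translate_coset_block r_coset_subset_G[OF H_carrier x] x by simp
  also have "\<dots> = coset_block G S H"
    using H_carrier x by (simp add: coset_mult_assoc)
  finally have block: "translate_vertex G (inv x) ` coset_block G S (H #> x) = coset_block G S H" .
  have "mg_isomorphic (mg_induced (Phi G S) (coset_block G S (H #> x)))
      (mg_induced (Phi G S) (translate_vertex G (inv x) ` coset_block G S (H #> x)))"
    using x
    by (intro mg_isomorphic_induced_image[where h = "translate_edge G (inv x)"]
        bij_betw_translate_vertex bij_betw_translate_edge)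
      (auto simp: mends_Phi translate_edge_def coset_block_def
        dest: mends_Phi_subset_mverts[unfolded mends_Phi])
  then show ?thesis
    using block induced_coset_block_subgroup[OF subgroup_H] by (simp add: generate.incl subsetI)
qed

end

theorem proposition2:
  fixes G :: "('a, 'm) monoid_scheme" and S :: "'a multiset"
  assumes "group G"
    and "S \<noteq> {#}"
    and "set_mset S \<subseteq> carrier G"
  shows "(\<forall>C \<in> mg_components (Phi G S).
            mg_isomorphic (mg_induced (Phi G S) C)
                          (Phi (G\<lparr>carrier := generate G (set_mset S)\<rparr>) S))
       \<and> (\<exists>f. bij_betw f (mg_components (Phi G S)) (rcosets\<^bsub>G\<^esub> (generate G (set_mset S))))"
proof -
  interpret Phi_graph G S
    using assms(1,3) by (simp add: Phi_graph_def Phi_graph_axioms_def)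
  have components: "mg_components (Phi G S) = coset_block G S ` (rcosets\<^bsub>G\<^esub> H)"
    using mg_components_Phi[OF assms(2)] .
  have "bij_betw (coset_block G S) (rcosets\<^bsub>G\<^esub> H) (mg_components (Phi G S))"
    using inj_on_coset_block[OF assms(2)] components by (simp add: bij_betw_def)
  moreover have "\<forall>C \<in> mg_components (Phi G S).
      mg_isomorphic (mg_induced (Phi G S) C) (Phi (G\<lparr>carrier := H\<rparr>) S)"
    unfolding components using component_isomorphic by (auto simp: RCOSETS_def)
  ultimately show ?thesis
    using bij_betw_inv_into by blast
qed

end
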